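(* Let $N\in\mathbb N$, $\beta\ge0$, and let $t\mapsto \boldsymbol c(t)$ be a differentiable curve in the set of $N\times N$ matrices with nonnegative entries. Then $$\frac{d}{dt}p_N(\beta,\boldsymbol c(t))=\frac{1}{2N^2}\sum_{i,j=1}^N\frac{dc_{ij}}{dt}\,\mathbb E_{N,\boldsymbol c(t)}\Big[\ln\Big(1-(1-e^{-\beta})\langle\delta(\sigma_i,\sigma_j)\rangle_{N,\beta J}\Big)\Big].$$
   Context: Fix an integer $q\ge2$, $[q]=\{1,\dots,q\}$. For $\sigma\in[q]^N$ and a real $N\times N$ matrix $J$, $H_N(\sigma,J)=\sum_{i,j=1}^N J_{ij}\delta(\sigma_i,\sigma_j)$ ($\delta$ the Kronecker delta), $Z_N(J)=\sum_{\sigma\in[q]^N}e^{-H_N(\sigma,J)}$, $\omega_{N,J}(\sigma)=e^{-H_N(\sigma,J)}/Z_N(J)$, and $\langle f\rangle_{N,J}=\sum_\sigma f(\sigma)\omega_{N,J}(\sigma)$. For an $N\times N$ matrix $\boldsymbol c=(c_{ij})$ with nonnegative entries, $\mathbb P_{N,\boldsymbol c}$ is the law of a random matrix $J$ with independent entries $J_{ij}\sim$ Poisson with mean $c_{ij}/(2N)$, and $\mathbb E_{N,\boldsymbol c}$ its expectation. The quenched pressure is $p_N(\beta,\boldsymbol c)=\mathbb E_{N,\boldsymbol c}[N^{-1}\ln Z_N(\beta J)]$. *)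

theory Defs
  imports "HOL-Analysis.Analysis" "HOL-Probability.Probability"
begin

text \<open>Spin indices are 0..N-1 (instead of 1..N); colours are 1..q.
  Interaction matrices J :: nat => nat => real (only entries i,j < N matter).\<close>

definition kdelta :: "nat \<Rightarrow> nat \<Rightarrow> real" where
  "kdelta a b = (if a = b then 1 else 0)"

definition configs :: "nat \<Rightarrow> nat \<Rightarrow> (nat \<Rightarrow> nat) set" where
  "configs q N = PiE {..<N} (\<lambda>_. {1..q})"

definition hamil :: "nat \<Rightarrow> (nat \<Rightarrow> nat) \<Rightarrow> (nat \<Rightarrow> nat \<Rightarrow> real) \<Rightarrow> real" where
  "hamil N \<sigma> J = (\<Sum>i<N. \<Sum>j<N. J i j * kdelta (\<sigma> i) (\<sigma> j))"

definition partfun :: "nat \<Rightarrow> nat \<Rightarrow> (nat \<Rightarrow> nat \<Rightarrow> real) \<Rightarrow> real" where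
  "partfun q N J = (\<Sum>\<sigma>\<in>configs q N. exp (- hamil N \<sigma> J))"

definition gibbs :: "nat \<Rightarrow> nat \<Rightarrow> (nat \<Rightarrow> nat \<Rightarrow> real) \<Rightarrow> (nat \<Rightarrow> nat) \<Rightarrow> real" where
  "gibbs q N J \<sigma> = exp (- hamil N \<sigma> J) / partfun q N J"

definition gibbs_avg :: "nat \<Rightarrow> nat \<Rightarrow> (nat \<Rightarrow> nat \<Rightarrow> real) \<Rightarrow> ((nat \<Rightarrow> nat) \<Rightarrow> real) \<Rightarrow> real" where
  "gibbs_avg q N J f = (\<Sum>\<sigma>\<in>configs q N. f \<sigma> * gibbs q N J \<sigma>)"

definition poisson_law :: "real \<Rightarrow> nat pmf" where
  "poisson_law r = (if r > 0 then poisson_pmf r else return_pmf 0)"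

definition J_law :: "nat \<Rightarrow> (nat \<Rightarrow> nat \<Rightarrow> real) \<Rightarrow> (nat \<times> nat \<Rightarrow> nat) pmf" where
  "J_law N c = Pi_pmf ({..<N} \<times> {..<N}) 0 (\<lambda>(i,j). poisson_law (c i j / (2 * real N)))"

definition EJ :: "nat \<Rightarrow> (nat \<Rightarrow> nat \<Rightarrow> real) \<Rightarrow> ((nat \<times> nat \<Rightarrow> nat) \<Rightarrow> real) \<Rightarrow> real" where
  "EJ N c F = measure_pmf.expectation (J_law N c) F"

definition scaleJ :: "real \<Rightarrow> (nat \<times> nat \<Rightarrow> nat) \<Rightarrow> nat \<Rightarrow> nat \<Rightarrow> real" where
  "scaleJ \<beta> J = (\<lambda>i j. \<beta> * real (J (i, j)))"

definition pressure :: "nat \<Rightarrow> nat \<Rightarrow> real \<Rightarrow> (nat \<Rightarrow> nat \<Rightarrow> real) \<Rightarrow> real" where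
  "pressure q N \<beta> c = EJ N c (\<lambda>J. ln (partfun q N (scaleJ \<beta> J)) / real N)"

end

theory Submission
  imports Defs
begin

text \<open>The quenched pressure is the expectation of \<open>g(J) = ln Z(\<beta>J) / N\<close> under a product of
  Poisson laws whose means \<open>c\<^sub>i\<^sub>j / (2N)\<close> depend on the curve parameter. The Poisson weights
  \<open>p\<^sub>m(x) = x\<^sup>m e\<^sup>-\<^sup>x / m!\<close> satisfy \<open>p\<^sub>m' = p\<^sub>m\<^sub>-\<^sub>1 - p\<^sub>m\<close>, so differentiating the expectation in the
  mean of the entry \<open>(i, j)\<close> and shifting the summation index gives \<open>E[g(J + e\<^sub>i\<^sub>j) - g(J)]\<close>.
  Differentiation under the infinite sum is justified by dominated convergence: \<open>ln Z\<close> grows at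
  most linearly in \<open>\<Sum> J\<close>, while the Poisson weights decay factorially. Finally, adding one edge
  \<open>(i, j)\<close> multiplies \<open>Z\<close> by \<open>1 - (1 - e\<^sup>-\<^sup>\<beta>) \<langle>\<delta>(\<sigma>\<^sub>i, \<sigma>\<^sub>j)\<rangle>\<close>.\<close>

lemma abs_prod_diff_le:
  fixes a b u e :: "'i \<Rightarrow> real"
  assumes "finite A"
    and "\<And>k. k \<in> A \<Longrightarrow> \<bar>a k\<bar> \<le> u k"
    and "\<And>k. k \<in> A \<Longrightarrow> \<bar>b k\<bar> \<le> u k"
    and "\<And>k. k \<in> A \<Longrightarrow> \<bar>a k - b k\<bar> \<le> e k"
  shows "\<bar>(\<Prod>k\<in>A. a k) - (\<Prod>k\<in>A. b k)\<bar> \<le> (\<Sum>k\<in>A. e k * (\<Prod>l\<in>A - {k}. u l))"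
  using assms
proof (induction A rule: finite_induct)
  case empty
  then show ?case by simp
next
  case (insert x A)
  have IH: "\<bar>(\<Prod>k\<in>A. a k) - (\<Prod>k\<in>A. b k)\<bar> \<le> (\<Sum>k\<in>A. e k * (\<Prod>l\<in>A - {k}. u l))"
    using insert by blast
  have pa: "\<bar>\<Prod>k\<in>A. a k\<bar> \<le> (\<Prod>k\<in>A. u k)"
    unfolding abs_prod using insert by (intro prod_mono) auto
  have "(\<Prod>k\<in>insert x A. a k) - (\<Prod>k\<in>insert x A. b k)
      = (a x - b x) * (\<Prod>k\<in>A. a k) + b x * ((\<Prod>k\<in>A. a k) - (\<Prod>k\<in>A. b k))"
    using insert by (simp add: algebra_simps)
  then have "\<bar>(\<Prod>k\<in>insert x A. a k) - (\<Prod>k\<in>insert x A. b k)\<bar>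
      \<le> \<bar>a x - b x\<bar> * \<bar>\<Prod>k\<in>A. a k\<bar> + \<bar>b x\<bar> * \<bar>(\<Prod>k\<in>A. a k) - (\<Prod>k\<in>A. b k)\<bar>"
    by (metis abs_mult abs_triangle_ineq)
  also have "\<dots> \<le> e x * (\<Prod>k\<in>A. u k) + u x * (\<Sum>k\<in>A. e k * (\<Prod>l\<in>A - {k}. u l))"
    using insert.prems pa IH by (intro add_mono mult_mono) (auto intro: order_trans[OF abs_ge_zero])
  also have "\<dots> = (\<Sum>k\<in>insert x A. e k * (\<Prod>l\<in>insert x A - {k}. u l))"
  proof -
    have "insert x A - {k} = insert x (A - {k})" if "k \<in> A" for k
      using insert that by auto
    then have "(\<Sum>k\<in>A. e k * (\<Prod>l\<in>insert x A - {k}. u l)) = u x * (\<Sum>k\<in>A. e k * (\<Prod>l\<in>A - {k}. u l))"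
      using insert by (auto simp: sum_distrib_left mult_ac intro!: sum.cong)
    moreover have "insert x A - {x} = A" using insert by auto
    ultimately show ?thesis using insert by simp
  qed
  finally show ?case .
qed

lemma tendsto_integral_dominated_at:
  fixes F :: "'a::first_countable_topology \<Rightarrow> 'b \<Rightarrow> real"
  assumes "\<And>y. F y \<in> borel_measurable M" "f \<in> borel_measurable M" "integrable M w"
    and "eventually (\<lambda>y. AE x in M. norm (F y x) \<le> w x) (at t)"
    and "AE x in M. ((\<lambda>y. F y x) \<longlongrightarrow> f x) (at t)"
  shows "((\<lambda>y. integral\<^sup>L M (F y)) \<longlongrightarrow> integral\<^sup>L M f) (at t)"
proof (subst tendsto_at_iff_sequentially, intro allI impI)
  fix X :: "nat \<Rightarrow> 'a"
  assume "\<forall>i. X i \<in> UNIV - {t}" "X \<longlonglongrightarrow> t"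
  then have X: "filterlim X (at t) sequentially"
    by (auto simp: filterlim_at)
  obtain n0 where n0: "\<And>n. n0 \<le> n \<Longrightarrow> AE x in M. norm (F (X n) x) \<le> w x"
    using filterlim_iff[THEN iffD1, OF X, rule_format, OF assms(4)]
    by (auto simp: eventually_sequentially)
  have "(\<lambda>n. integral\<^sup>L M (F (X (n + n0)))) \<longlonglongrightarrow> integral\<^sup>L M f"
  proof (rule integral_dominated_convergence[where w = w])
    show "AE x in M. (\<lambda>n. F (X (n + n0)) x) \<longlonglongrightarrow> f x"
      using assms(5)
      by eventually_elim (auto intro: LIMSEQ_ignore_initial_segment filterlim_compose[OF _ X])
  qed (use assms n0 in auto)
  then show "((\<lambda>y. integral\<^sup>L M (F y)) \<circ> X) \<longlonglongrightarrow> integral\<^sup>L M f"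
    unfolding comp_def by (rule LIMSEQ_offset)
qed

lemma has_real_derivative_imp_eventually_le:
  assumes "(f has_real_derivative D) (at t)"
  shows "eventually (\<lambda>y. \<bar>f y - f t\<bar> \<le> (\<bar>D\<bar> + 1) * \<bar>y - t\<bar>) (at t)"
proof -
  have "((\<lambda>y. (f y - f t) / (y - t)) \<longlongrightarrow> D) (at t)"
    using assms by (simp add: has_field_derivative_iff)
  from tendstoD[OF this, of 1]
  have "eventually (\<lambda>y. \<bar>(f y - f t) / (y - t) - D\<bar> < 1) (at t)"
    by (simp add: dist_real_def)
  then show ?thesis
    using eventually_neq_at_within[of t t UNIV]
  proof eventually_elim
    case (elim y)
    then have "\<bar>(f y - f t) / (y - t)\<bar> \<le> \<bar>D\<bar> + 1"
      by linarith
    then show ?case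
      using elim by (simp add: abs_divide divide_le_eq)
  qed
qed

lemma sum_fun_upd_Suc:
  assumes "finite A" "k \<in> A"
  shows "(\<Sum>l\<in>A. (n(k := Suc (n k))) l) = Suc (\<Sum>l\<in>A. n l)"
proof -
  have "(\<Sum>l\<in>A - {k}. (n(k := Suc (n k))) l) = (\<Sum>l\<in>A - {k}. n l)"
    by (intro sum.cong) auto
  then show ?thesis
    using sum.remove[OF assms, of n] sum.remove[OF assms, of "n(k := Suc (n k))"] by simp
qed

section \<open>Poisson weights\<close>

definition poisson_density :: "real \<Rightarrow> nat \<Rightarrow> real" where
  "poisson_density x m = x ^ m / fact m * exp (- x)"

definition poisson_density_deriv :: "real \<Rightarrow> nat \<Rightarrow> real" where
  "poisson_density_deriv x m = (if m = 0 then 0 else poisson_density x (m - 1)) - poisson_density x m"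

lemma pmf_poisson_law: "0 \<le> x \<Longrightarrow> pmf (poisson_law x) m = poisson_density x m"
  by (auto simp: poisson_law_def poisson_density_def indicator_def)

lemma poisson_density_nonneg: "0 \<le> x \<Longrightarrow> 0 \<le> poisson_density x m"
  by (simp add: poisson_density_def)

lemma has_real_derivative_poisson_density:
  "((\<lambda>x. poisson_density x m) has_real_derivative poisson_density_deriv x m) (at x)"
proof -
  have "((\<lambda>x. x ^ m / fact m * exp (- x)) has_real_derivative
          real m * x ^ (m - 1) / fact m * exp (- x) - x ^ m / fact m * exp (- x)) (at x)"
    by (auto intro!: derivative_eq_intros simp: diff_divide_distrib mult_ac)
  moreover have "real m * x ^ (m - 1) / fact m * exp (- x)
      = (if m = 0 then 0 else x ^ (m - 1) / fact (m - 1) * exp (- x))"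
  proof (cases m)
    case (Suc k)
    have f: "fact m = real m * (fact k :: real)"
      using Suc by (simp add: fact_Suc)
    have "real m * x ^ (m - 1) / fact m = x ^ k / fact k"
      unfolding f using Suc by simp
    moreover have "m \<noteq> 0" "m - 1 = k"
      using Suc by simp_all
    ultimately show ?thesis
      by simp
  qed simp
  ultimately show ?thesis
    unfolding poisson_density_deriv_def poisson_density_def by (simp only: if_distrib)
qed

lemma poisson_density_le:
  assumes "0 \<le> x" "x \<le> L"
  shows "poisson_density x m \<le> L ^ m / fact m"
proof -
  have "poisson_density x m \<le> x ^ m / fact m"
    using assms unfolding poisson_density_def by (intro mult_left_le) auto
  also have "\<dots> \<le> L ^ m / fact m"
    using assms by (intro divide_right_mono power_mono) auto
  finally show ?thesis .
qed

lemma poisson_density_le_double: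
  assumes "0 \<le> x" "x \<le> L" "1 \<le> L"
  shows "poisson_density x m \<le> (2 * L) ^ m / fact m"
proof (rule order_trans[OF poisson_density_le[OF assms(1,2)]])
  show "L ^ m / fact m \<le> (2 * L) ^ m / fact m"
    using assms by (intro divide_right_mono power_mono) auto
qed

lemma poisson_density_pred_le:
  assumes "0 \<le> x" "x \<le> L" "1 \<le> L" "0 < m"
  shows "poisson_density x (m - 1) \<le> (2 * L) ^ m / fact m"
proof -
  have "poisson_density x (m - 1) \<le> L ^ (m - 1) / fact (m - 1)"
    using assms(1,2) by (rule poisson_density_le)
  also have "\<dots> = real m * L ^ (m - 1) / fact m"
    using assms(4) by (cases m) (simp_all add: fact_Suc)
  also have "real m * L ^ (m - 1) \<le> 2 ^ m * L ^ m"
  proof (rule mult_mono)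
    show "real m \<le> 2 ^ m"
      using less_exp[of m] by (metis less_imp_le of_nat_le_iff of_nat_numeral of_nat_power)
    show "L ^ (m - 1) \<le> L ^ m"
      using assms by (intro power_increasing) auto
  qed (use assms in auto)
  then have "real m * L ^ (m - 1) / fact m \<le> (2 * L) ^ m / fact m"
    by (intro divide_right_mono) (auto simp: power_mult_distrib)
  finally show ?thesis .
qed

lemma abs_poisson_density_deriv_le:
  assumes "0 \<le> x" "x \<le> L" "1 \<le> L"
  shows "\<bar>poisson_density_deriv x m\<bar> \<le> (2 * L) ^ m / fact m"
proof -
  define B where "B = (2 * L) ^ m / fact m"
  have "0 \<le> poisson_density x m" "poisson_density x m \<le> B"
    using poisson_density_nonneg[OF assms(1)] poisson_density_le_double[OF assms]
    by (simp_all add: B_def)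
  moreover have "0 \<le> poisson_density x (m - 1)" "0 < m \<Longrightarrow> poisson_density x (m - 1) \<le> B"
    using poisson_density_nonneg[OF assms(1)] poisson_density_pred_le[OF assms]
    by (simp_all add: B_def)
  ultimately show ?thesis
    unfolding B_def[symmetric] poisson_density_deriv_def by (auto simp: abs_le_iff)
qed

lemma poisson_density_lipschitz:
  assumes "0 \<le> x" "x \<le> L" "0 \<le> y" "y \<le> L" "1 \<le> L"
  shows "\<bar>poisson_density x m - poisson_density y m\<bar> \<le> \<bar>x - y\<bar> * ((2 * L) ^ m / fact m)"
proof -
  have "norm (poisson_density x m - poisson_density y m) \<le> (2 * L) ^ m / fact m * norm (x - y)"
  proof (rule field_differentiable_bound[of "{0..L}"])
    show "((\<lambda>x. poisson_density x m) has_field_derivative poisson_density_deriv z m) (at z within {0..L})"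
      for z by (rule has_field_derivative_at_within[OF has_real_derivative_poisson_density])
    show "norm (poisson_density_deriv z m) \<le> (2 * L) ^ m / fact m" if "z \<in> {0..L}" for z
      using that assms(5) abs_poisson_density_deriv_le by auto
  qed (use assms in auto)
  then show ?thesis by (simp add: mult.commute)
qed

lemma abs_prod_poisson_density_diff_le:
  assumes "finite A" "1 \<le> L"
    and "\<And>k. k \<in> A \<Longrightarrow> 0 \<le> x k \<and> x k \<le> L" "\<And>k. k \<in> A \<Longrightarrow> 0 \<le> y k \<and> y k \<le> L"
    and "\<And>k. k \<in> A \<Longrightarrow> \<bar>x k - y k\<bar> \<le> e"
  shows "\<bar>(\<Prod>k\<in>A. poisson_density (x k) (n k)) - (\<Prod>k\<in>A. poisson_density (y k) (n k))\<bar>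
    \<le> e * real (card A) * (\<Prod>k\<in>A. (2 * L) ^ n k / fact (n k))"
proof -
  define u where "u k = (2 * L) ^ n k / fact (n k)" for k
  have "\<bar>(\<Prod>k\<in>A. poisson_density (x k) (n k)) - (\<Prod>k\<in>A. poisson_density (y k) (n k))\<bar>
      \<le> (\<Sum>k\<in>A. (e * u k) * (\<Prod>l\<in>A - {k}. u l))"
  proof (rule abs_prod_diff_le[OF assms(1)])
    fix k assume k: "k \<in> A"
    show "\<bar>poisson_density (x k) (n k)\<bar> \<le> u k" "\<bar>poisson_density (y k) (n k)\<bar> \<le> u k"
      using assms k poisson_density_le_double poisson_density_nonneg by (auto simp: u_def)
    have "\<bar>poisson_density (x k) (n k) - poisson_density (y k) (n k)\<bar> \<le> \<bar>x k - y k\<bar> * u k"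
      using assms k unfolding u_def by (intro poisson_density_lipschitz) auto
    also have "\<dots> \<le> e * u k"
      using assms k by (intro mult_right_mono) (auto simp: u_def)
    finally show "\<bar>poisson_density (x k) (n k) - poisson_density (y k) (n k)\<bar> \<le> e * u k" .
  qed
  also have "\<dots> = (\<Sum>k\<in>A. e * (\<Prod>l\<in>A. u l))"
    using assms(1) by (intro sum.cong refl) (simp add: prod.remove mult_ac)
  also have "\<dots> = e * real (card A) * (\<Prod>l\<in>A. u l)"
    by simp
  finally show ?thesis
    by (simp only: u_def)
qed

section \<open>Differentiating expectations of independent Poisson variables\<close>

locale poisson_family =
  fixes I :: "'i set" and \<mu> :: "real \<Rightarrow> 'i \<Rightarrow> real" and \<mu>' :: "'i \<Rightarrow> real"
    and U :: "real set" and t :: real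
  assumes finite_I: "finite I" and open_U: "open U" and t_in_U: "t \<in> U"
    and mean_nonneg: "\<And>s k. s \<in> U \<Longrightarrow> k \<in> I \<Longrightarrow> 0 \<le> \<mu> s k"
    and has_real_derivative_mean: "\<And>k. k \<in> I \<Longrightarrow> ((\<lambda>s. \<mu> s k) has_real_derivative \<mu>' k) (at t)"
begin

definition supported :: "('i \<Rightarrow> nat) \<Rightarrow> bool" where
  "supported n \<longleftrightarrow> (\<forall>x. x \<notin> I \<longrightarrow> n x = 0)"

definition law :: "real \<Rightarrow> ('i \<Rightarrow> nat) pmf" where
  "law s = Pi_pmf I 0 (\<lambda>k. poisson_law (\<mu> s k))"

definition density :: "real \<Rightarrow> ('i \<Rightarrow> nat) \<Rightarrow> real" where
  "density s n = (if supported n then \<Prod>k\<in>I. poisson_density (\<mu> s k) (n k) else 0)"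

definition density_deriv :: "('i \<Rightarrow> nat) \<Rightarrow> real" where
  "density_deriv n = (if supported n then
     \<Sum>k\<in>I. poisson_density_deriv (\<mu> t k) (n k) * \<mu>' k *
       (\<Prod>l\<in>I - {k}. poisson_density (\<mu> t l) (n l)) else 0)"

definition shifted_density :: "'i \<Rightarrow> ('i \<Rightarrow> nat) \<Rightarrow> real" where
  "shifted_density k n = (if n k = 0 then 0 else density t (n(k := n k - 1)))"

definition majorant :: "real \<Rightarrow> ('i \<Rightarrow> nat) \<Rightarrow> real" where
  "majorant L n = (if supported n then \<Prod>k\<in>I. L ^ n k / fact (n k) else 0)"

lemma supported_fun_upd: "k \<in> I \<Longrightarrow> supported (n(k := v)) \<longleftrightarrow> supported n"
  by (auto simp: supported_def)

lemma pmf_law: "s \<in> U \<Longrightarrow> pmf (law s) n = density s n"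
  using mean_nonneg
  by (auto simp: law_def density_def pmf_Pi[OF finite_I] supported_def pmf_poisson_law intro!: prod.cong)

lemma expectation_law:
  "s \<in> U \<Longrightarrow> measure_pmf.expectation (law s) F = integral\<^sup>L (count_space UNIV) (\<lambda>n. density s n * F n)"
  by (simp add: pmf_expectation_eq_infsetsum infsetsum_def pmf_law)

lemma density_remove:
  "k \<in> I \<Longrightarrow> density s n =
     (if supported n then poisson_density (\<mu> s k) (n k) * (\<Prod>l\<in>I - {k}. poisson_density (\<mu> s l) (n l)) else 0)"
  by (simp add: density_def prod.remove[OF finite_I])

text \<open>Up to the factor \<open>exp (L * card I)\<close>, the majorant is the density of independent
  Poisson variables of mean \<open>L\<close>.\<close>
lemma integrable_majorant:
  assumes "0 < L"
  shows "integrable (count_space UNIV) (majorant L)"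
proof -
  have eq: "majorant L n = exp (L * real (card I)) * pmf (Pi_pmf I 0 (\<lambda>_. poisson_pmf L)) n" for n
  proof (cases "supported n")
    case True
    have "pmf (Pi_pmf I 0 (\<lambda>_. poisson_pmf L)) n = (\<Prod>k\<in>I. L ^ n k / fact (n k) * exp (- L))"
      using True assms by (simp add: pmf_Pi[OF finite_I] supported_def)
    also have "\<dots> = (\<Prod>k\<in>I. L ^ n k / fact (n k)) * exp (- L) ^ card I"
      by (simp only: prod.distrib prod_constant)
    also have "exp (- L) ^ card I = exp (- (L * real (card I)))"
      by (simp add: exp_of_nat_mult[symmetric] mult_ac)
    finally show ?thesis
      using True by (simp add: majorant_def exp_minus field_simps)
  next
    case False
    then show ?thesis
      by (subst pmf_Pi[OF finite_I]) (auto simp: majorant_def supported_def)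
  qed
  show ?thesis
    unfolding eq[abs_def] by (intro integrable_mult_right integrable_pmf)
qed

lemma abs_prod_mult_le_majorant:
  assumes "supported n" "0 \<le> L"
    and "\<And>k. k \<in> I \<Longrightarrow> \<bar>a k\<bar> \<le> (2 * L) ^ n k / fact (n k)"
    and "\<bar>h\<bar> \<le> C * 2 ^ (\<Sum>k\<in>I. n k)"
  shows "\<bar>(\<Prod>k\<in>I. a k) * h\<bar> \<le> C * majorant (4 * L) n"
proof -
  have "\<bar>(\<Prod>k\<in>I. a k) * h\<bar> = (\<Prod>k\<in>I. \<bar>a k\<bar>) * \<bar>h\<bar>"
    by (simp add: abs_mult abs_prod)
  also have "\<dots> \<le> (\<Prod>k\<in>I. (2 * L) ^ n k / fact (n k)) * (C * (\<Prod>k\<in>I. 2 ^ n k))"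
    using assms by (intro mult_mono prod_mono) (auto simp: power_sum intro!: prod_nonneg)
  also have "\<dots> = C * (\<Prod>k\<in>I. (2 * L) ^ n k / fact (n k) * 2 ^ n k)"
    by (simp only: prod.distrib mult_ac)
  also have "\<dots> = C * majorant (4 * L) n"
  proof -
    have "(2 * L) ^ m / fact m * 2 ^ m = (4 * L) ^ m / fact m" for m :: nat
    proof -
      have "(2 * L) ^ m * 2 ^ m = (2 * L * 2) ^ m"
        by (rule power_mult_distrib[symmetric])
      also have "2 * L * 2 = 4 * L"
        by simp
      finally show ?thesis
        by (simp only: times_divide_eq_left)
    qed
    then show ?thesis
      using assms(1) by (simp only: majorant_def if_True)
  qed
  finally show ?thesis .
qed

lemma abs_density_mult_le_majorant:
  assumes "\<And>k. k \<in> I \<Longrightarrow> 0 \<le> \<mu> s k \<and> \<mu> s k \<le> L" "1 \<le> L"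
    and "\<bar>h\<bar> \<le> C * 2 ^ (\<Sum>k\<in>I. n k)"
  shows "\<bar>density s n * h\<bar> \<le> C * majorant (4 * L) n"
proof (cases "supported n")
  case True
  have "\<bar>(\<Prod>k\<in>I. poisson_density (\<mu> s k) (n k)) * h\<bar> \<le> C * majorant (4 * L) n"
    using assms poisson_density_le_double poisson_density_nonneg
    by (intro abs_prod_mult_le_majorant[OF True]) auto
  then show ?thesis
    using True by (simp add: density_def)
qed (simp add: density_def majorant_def)

lemma integrable_majorized:
  assumes "\<And>n. \<bar>f n\<bar> \<le> C * majorant L n" "0 < L"
  shows "integrable (count_space UNIV) f"
proof (rule Bochner_Integration.integrable_bound)
  show "integrable (count_space UNIV) (\<lambda>n. C * majorant L n)"
    using assms by (intro integrable_mult_right integrable_majorant)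
  show "AE n in count_space UNIV. norm (f n) \<le> norm (C * majorant L n)"
    using assms(1) by (auto intro: order_trans[OF _ abs_ge_self])
qed auto

lemma integrable_density_mult:
  assumes "\<And>k. k \<in> I \<Longrightarrow> 0 \<le> \<mu> s k \<and> \<mu> s k \<le> L" "1 \<le> L"
    and "\<And>n. \<bar>h n\<bar> \<le> C * 2 ^ (\<Sum>k\<in>I. n k)"
  shows "integrable (count_space UNIV) (\<lambda>n. density s n * h n)"
  using assms by (intro integrable_majorized[where L = "4 * L"] abs_density_mult_le_majorant) auto

lemma has_real_derivative_density:
  "((\<lambda>s. density s n) has_real_derivative density_deriv n) (at t)"
proof (cases "supported n")
  case True
  have "((\<lambda>s. \<Prod>k\<in>I. poisson_density (\<mu> s k) (n k)) has_real_derivative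
          (\<Sum>k\<in>I. poisson_density_deriv (\<mu> t k) (n k) * \<mu>' k *
             (\<Prod>l\<in>I - {k}. poisson_density (\<mu> t l) (n l)))) (at t)"
    by (intro has_field_derivative_prod DERIV_chain2[OF has_real_derivative_poisson_density]
          has_real_derivative_mean)
  then show ?thesis
    using True by (simp add: density_def density_deriv_def)
qed (simp add: density_def density_deriv_def)

lemma abs_density_diff_mult_le:
  assumes "\<And>k. k \<in> I \<Longrightarrow> 0 \<le> \<mu> s k \<and> \<mu> s k \<le> L"
    and "\<And>k. k \<in> I \<Longrightarrow> 0 \<le> \<mu> t k \<and> \<mu> t k \<le> L"
    and "\<And>k. k \<in> I \<Longrightarrow> \<bar>\<mu> s k - \<mu> t k\<bar> \<le> e" "0 \<le> e" "1 \<le> L"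
    and "\<bar>h\<bar> \<le> C * 2 ^ (\<Sum>k\<in>I. n k)"
  shows "\<bar>(density s n - density t n) * h\<bar> \<le> e * real (card I) * (C * majorant (4 * L) n)"
proof (cases "supported n")
  case True
  define u where "u = (\<Prod>k\<in>I. (2 * L) ^ n k / fact (n k))"
  have "\<bar>(density s n - density t n) * h\<bar>
      = \<bar>(\<Prod>k\<in>I. poisson_density (\<mu> s k) (n k)) - (\<Prod>k\<in>I. poisson_density (\<mu> t k) (n k))\<bar> * \<bar>h\<bar>"
    using True by (simp add: density_def abs_mult)
  also have "\<dots> \<le> e * real (card I) * u * \<bar>h\<bar>"
    unfolding u_def using finite_I assms(1-3,5)
    by (intro mult_right_mono abs_prod_poisson_density_diff_le) auto
  also have "\<dots> = e * real (card I) * \<bar>u * h\<bar>"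
    using assms(5) by (simp add: u_def abs_mult prod_nonneg)
  also have "\<dots> \<le> e * real (card I) * (C * majorant (4 * L) n)"
    using True assms unfolding u_def by (intro mult_left_mono abs_prod_mult_le_majorant) auto
  finally show ?thesis .
qed (simp add: density_def majorant_def)

lemma eventually_mean_bounds:
  obtains K L where "0 \<le> K" "1 \<le> L" "\<And>k. k \<in> I \<Longrightarrow> \<mu> t k \<le> L"
    "eventually (\<lambda>y. y \<in> U \<and> (\<forall>k\<in>I. \<bar>\<mu> y k - \<mu> t k\<bar> \<le> K * \<bar>y - t\<bar> \<and> \<mu> y k \<le> L)) (at t)"
proof
  define K where "K = 1 + (\<Sum>k\<in>I. \<bar>\<mu>' k\<bar>)"
  define L where "L = 1 + (\<Sum>k\<in>I. \<mu> t k) + K"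
  show K_nonneg: "0 \<le> K"
    by (simp add: K_def sum_nonneg add_nonneg_nonneg)
  have mean_le_sum: "\<mu> t k \<le> (\<Sum>k\<in>I. \<mu> t k)" if "k \<in> I" for k
    using that mean_nonneg[OF t_in_U] finite_I by (intro member_le_sum) auto
  show "1 \<le> L" "\<And>k. k \<in> I \<Longrightarrow> \<mu> t k \<le> L"
    using K_nonneg mean_le_sum mean_nonneg[OF t_in_U] by (force simp: L_def sum_nonneg)+
  have "eventually (\<lambda>y. \<forall>k\<in>I. \<bar>\<mu> y k - \<mu> t k\<bar> \<le> K * \<bar>y - t\<bar>) (at t)"
  proof (rule eventually_ball_finite[OF finite_I], intro ballI)
    fix k assume k: "k \<in> I"
    have "\<bar>\<mu>' k\<bar> \<le> (\<Sum>k\<in>I. \<bar>\<mu>' k\<bar>)"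
      using k finite_I by (intro member_le_sum) auto
    then have "\<bar>\<mu>' k\<bar> + 1 \<le> K"
      by (simp add: K_def)
    with has_real_derivative_imp_eventually_le[OF has_real_derivative_mean[OF k]]
    show "eventually (\<lambda>y. \<bar>\<mu> y k - \<mu> t k\<bar> \<le> K * \<bar>y - t\<bar>) (at t)"
      by (elim eventually_mono) (meson abs_ge_zero mult_right_mono order_trans)
  qed
  moreover have "eventually (\<lambda>y. y \<in> U) (at t)"
    using eventually_at_in_open[OF open_U t_in_U] by (rule eventually_mono) simp
  moreover have "eventually (\<lambda>y. \<bar>y - t\<bar> < 1) (at t)"
    unfolding eventually_at by (auto simp: dist_real_def intro!: exI[of _ 1])
  ultimately show "eventually (\<lambda>y. y \<in> U \<and> (\<forall>k\<in>I. \<bar>\<mu> y k - \<mu> t k\<bar> \<le> K * \<bar>y - t\<bar> \<and> \<mu> y k \<le> L)) (at t)"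
  proof eventually_elim
    case (elim y)
    have "\<mu> y k \<le> L" if k: "k \<in> I" for k
    proof -
      have "\<mu> y k \<le> \<mu> t k + K * \<bar>y - t\<bar>"
        using elim k by (auto simp: abs_le_iff)
      also have "K * \<bar>y - t\<bar> \<le> K"
        using elim K_nonneg by (simp add: mult_left_le)
      finally show ?thesis
        using mean_le_sum[OF k] by (simp add: L_def)
    qed
    then show ?case
      using elim by auto
  qed
qed

lemma integrable_density_at_mult:
  assumes "\<And>n. \<bar>h n\<bar> \<le> C * 2 ^ (\<Sum>k\<in>I. n k)"
  shows "integrable (count_space UNIV) (\<lambda>n. density t n * h n)"
proof -
  obtain K L where "1 \<le> L" "\<And>k. k \<in> I \<Longrightarrow> \<mu> t k \<le> L"
    using eventually_mean_bounds by blast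
  then show ?thesis
    using mean_nonneg[OF t_in_U] assms by (intro integrable_density_mult) auto
qed

text \<open>The means are locally Lipschitz at \<open>t\<close>, so near \<open>t\<close> the difference quotients of the
  density, multiplied by \<open>g\<close>, are dominated by a multiple of the majorant.\<close>
lemma tendsto_integral_density_quotient:
  assumes growth: "\<And>n. \<bar>g n\<bar> \<le> C * 2 ^ (\<Sum>k\<in>I. n k)"
  shows "((\<lambda>y. integral\<^sup>L (count_space UNIV) (\<lambda>n. (density y n - density t n) / (y - t) * g n))
           \<longlongrightarrow> integral\<^sup>L (count_space UNIV) (\<lambda>n. density_deriv n * g n)) (at t)"
proof -
  obtain K L where K: "0 \<le> K" and L: "1 \<le> L" and mean_t: "\<And>k. k \<in> I \<Longrightarrow> \<mu> t k \<le> L"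
    and near: "eventually (\<lambda>y. y \<in> U \<and> (\<forall>k\<in>I. \<bar>\<mu> y k - \<mu> t k\<bar> \<le> K * \<bar>y - t\<bar> \<and> \<mu> y k \<le> L)) (at t)"
    using eventually_mean_bounds by blast
  define w where "w n = K * real (card I) * (C * majorant (4 * L) n)" for n
  show ?thesis
  proof (rule tendsto_integral_dominated_at[where w = w])
    show "integrable (count_space UNIV) w"
      unfolding w_def using L by (intro integrable_mult_right integrable_majorant) auto
    show "eventually (\<lambda>y. AE n in count_space UNIV.
        norm ((density y n - density t n) / (y - t) * g n) \<le> w n) (at t)"
      using near eventually_neq_at_within[of t t UNIV]
    proof eventually_elim
      case (elim y)
      have "\<bar>(density y n - density t n) * g n\<bar> \<le> (K * \<bar>y - t\<bar>) * real (card I) * (C * majorant (4 * L) n)" for n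
        using elim mean_nonneg t_in_U mean_t K L growth by (intro abs_density_diff_mult_le) auto
      then have "\<bar>(density y n - density t n) * g n\<bar> / \<bar>y - t\<bar> \<le> w n" for n
        using elim by (simp add: divide_le_eq w_def mult_ac)
      then show ?case
        by (simp add: abs_mult abs_divide)
    qed
    show "AE n in count_space UNIV. ((\<lambda>y. (density y n - density t n) / (y - t) * g n)
        \<longlongrightarrow> density_deriv n * g n) (at t)"
    proof (rule AE_I2)
      fix n
      have "((\<lambda>y. (density y n - density t n) / (y - t)) \<longlongrightarrow> density_deriv n) (at t)"
        using has_real_derivative_density by (simp add: has_field_derivative_iff)
      then show "((\<lambda>y. (density y n - density t n) / (y - t) * g n) \<longlongrightarrow> density_deriv n * g n) (at t)"
        by (rule tendsto_mult_right)
    qed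
  qed auto
qed

lemma has_real_derivative_integral_density:
  assumes growth: "\<And>n. \<bar>g n\<bar> \<le> C * 2 ^ (\<Sum>k\<in>I. n k)"
  shows "((\<lambda>s. integral\<^sup>L (count_space UNIV) (\<lambda>n. density s n * g n)) has_real_derivative
           integral\<^sup>L (count_space UNIV) (\<lambda>n. density_deriv n * g n)) (at t)"
proof -
  obtain K L where L: "1 \<le> L"
    and near: "eventually (\<lambda>y. y \<in> U \<and> (\<forall>k\<in>I. \<bar>\<mu> y k - \<mu> t k\<bar> \<le> K * \<bar>y - t\<bar> \<and> \<mu> y k \<le> L)) (at t)"
    using eventually_mean_bounds by blast
  have integrable_t: "integrable (count_space UNIV) (\<lambda>n. density t n * g n)"
    by (rule integrable_density_at_mult[OF growth])
  have "eventually (\<lambda>y. integral\<^sup>L (count_space UNIV) (\<lambda>n. (density y n - density t n) / (y - t) * g n)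
      = (integral\<^sup>L (count_space UNIV) (\<lambda>n. density y n * g n)
          - integral\<^sup>L (count_space UNIV) (\<lambda>n. density t n * g n)) / (y - t)) (at t)"
    using near
  proof eventually_elim
    case (elim y)
    have "integrable (count_space UNIV) (\<lambda>n. density y n * g n)"
      using elim mean_nonneg L growth by (intro integrable_density_mult) auto
    then show ?case
      using integrable_t by (simp add: left_diff_distrib flip: Bochner_Integration.integral_diff)
  qed
  with tendsto_integral_density_quotient[OF growth]
  have "((\<lambda>y. (integral\<^sup>L (count_space UNIV) (\<lambda>n. density y n * g n)
      - integral\<^sup>L (count_space UNIV) (\<lambda>n. density t n * g n)) / (y - t))
      \<longlongrightarrow> integral\<^sup>L (count_space UNIV) (\<lambda>n. density_deriv n * g n)) (at t)"
    by (rule Lim_transform_eventually)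
  then show ?thesis
    by (simp add: has_field_derivative_iff)
qed

lemma density_deriv_eq: "density_deriv n = (\<Sum>k\<in>I. \<mu>' k * (shifted_density k n - density t n))"
proof (cases "supported n")
  case True
  have term_eq: "poisson_density_deriv (\<mu> t k) (n k) * \<mu>' k * (\<Prod>l\<in>I - {k}. poisson_density (\<mu> t l) (n l))
      = \<mu>' k * (shifted_density k n - density t n)" if k: "k \<in> I" for k
  proof -
    have "(\<Prod>l\<in>I - {k}. poisson_density (\<mu> t l) ((n(k := n k - 1)) l))
        = (\<Prod>l\<in>I - {k}. poisson_density (\<mu> t l) (n l))"
      by (intro prod.cong) auto
    then show ?thesis
      using True k
      by (simp add: shifted_density_def density_remove supported_fun_upd poisson_density_deriv_def algebra_simps)
  qed
  show ?thesis
    unfolding density_deriv_def by (simp only: True if_True) (rule sum.cong[OF refl term_eq])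
next
  case False
  then have "shifted_density k n = 0" if "k \<in> I" for k
    using that by (simp add: shifted_density_def density_def supported_fun_upd)
  then show ?thesis
    using False by (simp add: density_deriv_def density_def)
qed

lemma shifted_density_reindex:
  assumes "integrable (count_space UNIV) (\<lambda>m. density t m * h (m(k := Suc (m k))))"
  shows "integrable (count_space UNIV) (\<lambda>n. shifted_density k n * h n)"
    and "integral\<^sup>L (count_space UNIV) (\<lambda>n. shifted_density k n * h n)
           = integral\<^sup>L (count_space UNIV) (\<lambda>m. density t m * h (m(k := Suc (m k))))"
proof -
  define sh where "sh m = m(k := Suc (m k))" for m :: "'i \<Rightarrow> nat"
  define f where "f = (\<lambda>n. shifted_density k n * h n)"
  have bij: "bij_betw sh UNIV {n. n k \<noteq> 0}"
    by (rule bij_betw_byWitness[where f' = "\<lambda>n. n(k := n k - 1)"]) (auto simp: sh_def)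
  have f_sh: "f (sh m) = density t m * h (m(k := Suc (m k)))" for m
    by (simp add: f_def sh_def shifted_density_def)
  have f_vanish: "f n = 0" if "n k = 0" for n
    using that by (simp add: f_def shifted_density_def)
  have "integrable (count_space {n. n k \<noteq> 0}) f"
    using assms abs_summable_on_reindex_bij_betw[OF bij, of f]
    by (simp add: Infinite_Set_Sum.abs_summable_on_def f_sh)
  moreover have "integrable (count_space UNIV) f \<longleftrightarrow> integrable (count_space {n. n k \<noteq> 0}) f"
    using abs_summable_on_cong_neutral[of UNIV "{n. n k \<noteq> 0}" f f]
    by (simp add: Infinite_Set_Sum.abs_summable_on_def f_vanish)
  ultimately show "integrable (count_space UNIV) (\<lambda>n. shifted_density k n * h n)"
    by (simp add: f_def)
  have "infsetsum f UNIV = infsetsum f {n. n k \<noteq> 0}"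
    by (rule infsetsum_cong_neutral) (auto intro: f_vanish)
  also have "\<dots> = infsetsum (\<lambda>m. f (sh m)) UNIV"
    by (rule infsetsum_reindex_bij_betw[OF bij, symmetric])
  finally show "integral\<^sup>L (count_space UNIV) (\<lambda>n. shifted_density k n * h n)
      = integral\<^sup>L (count_space UNIV) (\<lambda>m. density t m * h (m(k := Suc (m k))))"
    by (simp add: infsetsum_def f_sh flip: f_def)
qed

lemma growth_fun_upd_Suc:
  fixes g :: "('i \<Rightarrow> nat) \<Rightarrow> real"
  assumes "\<And>n. \<bar>g n\<bar> \<le> C * 2 ^ (\<Sum>k\<in>I. n k)" "k \<in> I"
  shows "\<bar>g (n(k := Suc (n k)))\<bar> \<le> 2 * C * 2 ^ (\<Sum>k\<in>I. n k)"
  using assms(1)[of "n(k := Suc (n k))"] sum_fun_upd_Suc[OF finite_I assms(2)] by simp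

lemma integral_shifted_density_mult_diff:
  assumes growth: "\<And>n. \<bar>g n\<bar> \<le> C * 2 ^ (\<Sum>k\<in>I. n k)" and "k \<in> I"
  shows "integrable (count_space UNIV) (\<lambda>n. shifted_density k n * g n)"
    and "integral\<^sup>L (count_space UNIV) (\<lambda>n. shifted_density k n * g n)
           - integral\<^sup>L (count_space UNIV) (\<lambda>n. density t n * g n)
         = measure_pmf.expectation (law t) (\<lambda>n. g (n(k := Suc (n k))) - g n)"
proof -
  have integrable_shift: "integrable (count_space UNIV) (\<lambda>n. density t n * g (n(k := Suc (n k))))"
    by (rule integrable_density_at_mult[OF growth_fun_upd_Suc[OF growth \<open>k \<in> I\<close>]])
  then show "integrable (count_space UNIV) (\<lambda>n. shifted_density k n * g n)"
    by (rule shifted_density_reindex(1))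
  have "integral\<^sup>L (count_space UNIV) (\<lambda>n. shifted_density k n * g n)
        - integral\<^sup>L (count_space UNIV) (\<lambda>n. density t n * g n)
      = integral\<^sup>L (count_space UNIV) (\<lambda>n. density t n * g (n(k := Suc (n k))))
        - integral\<^sup>L (count_space UNIV) (\<lambda>n. density t n * g n)"
    by (simp only: shifted_density_reindex(2)[OF integrable_shift])
  also have "\<dots> = integral\<^sup>L (count_space UNIV) (\<lambda>n. density t n * (g (n(k := Suc (n k))) - g n))"
    unfolding right_diff_distrib
    by (rule Bochner_Integration.integral_diff[symmetric, OF integrable_shift integrable_density_at_mult[OF growth]])
  also have "\<dots> = measure_pmf.expectation (law t) (\<lambda>n. g (n(k := Suc (n k))) - g n)"
    by (rule expectation_law[OF t_in_U, symmetric])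
  finally show "integral\<^sup>L (count_space UNIV) (\<lambda>n. shifted_density k n * g n)
        - integral\<^sup>L (count_space UNIV) (\<lambda>n. density t n * g n)
      = measure_pmf.expectation (law t) (\<lambda>n. g (n(k := Suc (n k))) - g n)" .
qed

lemma integral_density_deriv_mult:
  assumes growth: "\<And>n. \<bar>g n\<bar> \<le> C * 2 ^ (\<Sum>k\<in>I. n k)"
  shows "integral\<^sup>L (count_space UNIV) (\<lambda>n. density_deriv n * g n)
    = (\<Sum>k\<in>I. \<mu>' k * measure_pmf.expectation (law t) (\<lambda>n. g (n(k := Suc (n k))) - g n))"
proof -
  have "density_deriv n * g n = (\<Sum>k\<in>I. \<mu>' k * (shifted_density k n * g n - density t n * g n))" for n
    unfolding density_deriv_eq sum_distrib_right by (intro sum.cong refl) (simp add: algebra_simps)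
  then have "integral\<^sup>L (count_space UNIV) (\<lambda>n. density_deriv n * g n)
      = integral\<^sup>L (count_space UNIV)
          (\<lambda>n. \<Sum>k\<in>I. \<mu>' k * (shifted_density k n * g n - density t n * g n))"
    by simp
  also have "\<dots> = (\<Sum>k\<in>I. \<mu>' k * (integral\<^sup>L (count_space UNIV) (\<lambda>n. shifted_density k n * g n)
                          - integral\<^sup>L (count_space UNIV) (\<lambda>n. density t n * g n)))"
    using integral_shifted_density_mult_diff(1)[OF growth] integrable_density_at_mult[OF growth]
    by (simp add: Bochner_Integration.integral_sum)
  also have "\<dots> = (\<Sum>k\<in>I. \<mu>' k * measure_pmf.expectation (law t) (\<lambda>n. g (n(k := Suc (n k))) - g n))"
    by (intro sum.cong refl arg_cong[where f = "(*) (\<mu>' _)"] integral_shifted_density_mult_diff(2)[OF growth])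
  finally show ?thesis .
qed

theorem has_real_derivative_expectation_law:
  assumes "\<And>n. \<bar>g n\<bar> \<le> C * 2 ^ (\<Sum>k\<in>I. n k)"
  shows "((\<lambda>s. measure_pmf.expectation (law s) g) has_real_derivative
           (\<Sum>k\<in>I. \<mu>' k * measure_pmf.expectation (law t) (\<lambda>n. g (n(k := Suc (n k))) - g n))) (at t)"
  using has_real_derivative_integral_density[OF assms]
  unfolding integral_density_deriv_mult[OF assms]
  by (rule has_field_derivative_transform_within_open[OF _ open_U t_in_U]) (simp add: expectation_law)

end

section \<open>The Potts partition function\<close>

lemma finite_configs: "finite (configs q N)"
  by (simp add: configs_def finite_PiE)

lemma card_configs: "card (configs q N) = q ^ N"
  by (simp add: configs_def card_PiE)

lemma partfun_pos: "1 \<le> q \<Longrightarrow> 0 < partfun q N J"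
  unfolding partfun_def
  by (intro sum_pos finite_configs) (auto simp: configs_def PiE_eq_empty_iff)

lemma hamil_scaleJ_nonneg: "0 \<le> \<beta> \<Longrightarrow> 0 \<le> hamil N \<sigma> (scaleJ \<beta> J)"
  by (auto simp: hamil_def scaleJ_def kdelta_def intro!: sum_nonneg)

lemma hamil_scaleJ_le:
  assumes "0 \<le> \<beta>"
  shows "hamil N \<sigma> (scaleJ \<beta> J) \<le> \<beta> * real (\<Sum>k\<in>{..<N} \<times> {..<N}. J k)"
proof -
  have "hamil N \<sigma> (scaleJ \<beta> J) \<le> (\<Sum>i<N. \<Sum>j<N. \<beta> * real (J (i, j)))"
    unfolding hamil_def scaleJ_def using assms by (intro sum_mono) (auto simp: kdelta_def)
  also have "\<dots> = \<beta> * real (\<Sum>k\<in>{..<N} \<times> {..<N}. J k)"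
    by (simp add: sum.cartesian_product sum_distrib_left case_prod_unfold)
  finally show ?thesis .
qed

lemma abs_ln_partfun_scaleJ_le:
  assumes "0 \<le> \<beta>" "1 \<le> q"
  shows "\<bar>ln (partfun q N (scaleJ \<beta> J))\<bar> \<le> real N * ln q + \<beta> * real (\<Sum>k\<in>{..<N} \<times> {..<N}. J k)"
proof -
  define S where "S = real (\<Sum>k\<in>{..<N} \<times> {..<N}. J k)"
  define Z where "Z = partfun q N (scaleJ \<beta> J)"
  have q_pow: "0 < real q ^ N"
    using assms by simp
  have Z_pos: "0 < Z"
    unfolding Z_def using assms(2) by (rule partfun_pos)
  have "(\<Sum>\<sigma>\<in>configs q N. exp (- (\<beta> * S))) \<le> Z"
    using hamil_scaleJ_le[OF assms(1)] unfolding Z_def partfun_def S_def by (intro sum_mono) auto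
  then have "real q ^ N * exp (- (\<beta> * S)) \<le> Z"
    by (simp add: card_configs)
  then have lower: "real N * ln q - \<beta> * S \<le> ln Z"
    using q_pow Z_pos assms by (subst (asm) ln_le_cancel_iff[symmetric]) (auto simp: ln_mult ln_realpow)
  have "Z \<le> (\<Sum>\<sigma>\<in>configs q N. 1)"
    using hamil_scaleJ_nonneg[OF assms(1)] unfolding Z_def partfun_def by (intro sum_mono) auto
  then have "Z \<le> real q ^ N"
    by (simp add: card_configs)
  then have "ln Z \<le> ln (real q ^ N)"
    using Z_pos q_pow by simp
  then have upper: "ln Z \<le> real N * ln q"
    by (simp add: ln_realpow)
  have "0 \<le> S"
    unfolding S_def by (rule of_nat_0_le_iff)
  then have "0 \<le> real N * ln q" "0 \<le> \<beta> * S"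
    using assms by simp_all
  then have "\<bar>ln Z\<bar> \<le> real N * ln q + \<beta> * S"
    using lower upper by linarith
  then show ?thesis
    by (simp only: Z_def S_def)
qed

lemma hamil_scaleJ_increment:
  assumes "i < N" "j < N"
  shows "hamil N \<sigma> (scaleJ \<beta> (J((i, j) := Suc (J (i, j)))))
    = hamil N \<sigma> (scaleJ \<beta> J) + \<beta> * kdelta (\<sigma> i) (\<sigma> j)"
proof -
  define d where "d a b = (if a = i then if b = j then \<beta> * kdelta (\<sigma> i) (\<sigma> j) else 0 else 0)" for a b
  have "scaleJ \<beta> (J((i, j) := Suc (J (i, j)))) a b * kdelta (\<sigma> a) (\<sigma> b)
      = scaleJ \<beta> J a b * kdelta (\<sigma> a) (\<sigma> b) + d a b" for a b
    by (auto simp: scaleJ_def d_def algebra_simps)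
  moreover have "(\<Sum>a<N. \<Sum>b<N. d a b) = (\<Sum>a<N. if a = i then \<beta> * kdelta (\<sigma> i) (\<sigma> j) else 0)"
    using assms by (intro sum.cong refl) (simp add: d_def sum.delta)
  moreover have "\<dots> = \<beta> * kdelta (\<sigma> i) (\<sigma> j)"
    using assms by (simp add: sum.delta)
  ultimately show ?thesis
    by (simp add: hamil_def sum.distrib)
qed

lemma partfun_scaleJ_increment:
  assumes "i < N" "j < N"
  shows "partfun q N (scaleJ \<beta> (J((i, j) := Suc (J (i, j)))))
    = partfun q N (scaleJ \<beta> J)
      - (1 - exp (- \<beta>)) * (\<Sum>\<sigma>\<in>configs q N. kdelta (\<sigma> i) (\<sigma> j) * exp (- hamil N \<sigma> (scaleJ \<beta> J)))"
proof -
  have "exp (- hamil N \<sigma> (scaleJ \<beta> (J((i, j) := Suc (J (i, j))))))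
      = exp (- hamil N \<sigma> (scaleJ \<beta> J))
        - (1 - exp (- \<beta>)) * (kdelta (\<sigma> i) (\<sigma> j) * exp (- hamil N \<sigma> (scaleJ \<beta> J)))" for \<sigma>
    unfolding hamil_scaleJ_increment[OF assms]
    by (auto simp: kdelta_def exp_diff exp_add exp_minus field_simps)
  then show ?thesis
    unfolding partfun_def by (simp add: sum_subtractf sum_distrib_left)
qed

lemma ln_partfun_scaleJ_increment:
  assumes "i < N" "j < N" "1 \<le> q"
  shows "ln (partfun q N (scaleJ \<beta> (J((i, j) := Suc (J (i, j)))))) - ln (partfun q N (scaleJ \<beta> J))
    = ln (1 - (1 - exp (- \<beta>)) * gibbs_avg q N (scaleJ \<beta> J) (\<lambda>\<sigma>. kdelta (\<sigma> i) (\<sigma> j)))"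
proof -
  define Z where "Z = partfun q N (scaleJ \<beta> J)"
  define Z' where "Z' = partfun q N (scaleJ \<beta> (J((i, j) := Suc (J (i, j)))))"
  have Z_pos: "0 < Z" "0 < Z'"
    unfolding Z_def Z'_def using assms(3) by (auto intro: partfun_pos)
  have "1 - (1 - exp (- \<beta>)) * gibbs_avg q N (scaleJ \<beta> J) (\<lambda>\<sigma>. kdelta (\<sigma> i) (\<sigma> j)) = Z' / Z"
    using Z_pos partfun_scaleJ_increment[OF assms(1,2), of q \<beta> J]
    by (simp add: gibbs_avg_def gibbs_def Z_def Z'_def sum_divide_distrib[symmetric] field_simps)
  then show ?thesis
    using Z_pos by (simp add: ln_div Z_def Z'_def)
qed

lemma abs_ln_partfun_scaleJ_div_le:
  assumes "0 \<le> \<beta>" "1 \<le> q" "1 \<le> N"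
  shows "\<bar>ln (partfun q N (scaleJ \<beta> J)) / real N\<bar> \<le> (ln q + \<beta>) * 2 ^ (\<Sum>k\<in>{..<N} \<times> {..<N}. J k)"
proof -
  define S where "S = (\<Sum>k\<in>{..<N} \<times> {..<N}. J k)"
  have "\<bar>ln (partfun q N (scaleJ \<beta> J)) / real N\<bar> \<le> (real N * ln q + \<beta> * real S) / real N"
    using abs_ln_partfun_scaleJ_le[OF assms(1,2), of N J]
    by (simp add: abs_divide S_def divide_right_mono)
  also have "\<dots> \<le> ln q + \<beta> * real S"
  proof -
    have "\<beta> * real S * (1 / real N) \<le> \<beta> * real S"
      using assms by (intro mult_left_le) auto
    then show ?thesis
      using assms by (simp add: add_divide_distrib)
  qed
  also have "\<dots> \<le> ln q * 2 ^ S + \<beta> * 2 ^ S"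
  proof (intro add_mono mult_left_mono)
    show "ln q \<le> ln q * 2 ^ S"
      using assms by (simp add: mult_le_cancel_left1)
    show "real S \<le> 2 ^ S"
      using less_exp[of S] by (metis less_imp_le of_nat_le_iff of_nat_numeral of_nat_power)
  qed (use assms in auto)
  finally show ?thesis
    by (simp add: S_def algebra_simps)
qed

section \<open>The derivative of the quenched pressure\<close>

lemma has_real_derivative_pressure:
  assumes "1 \<le> q" "1 \<le> N" "0 \<le> \<beta>" "open U" "t \<in> U"
    and "\<And>s i j. s \<in> U \<Longrightarrow> i < N \<Longrightarrow> j < N \<Longrightarrow> 0 \<le> c s i j"
    and "\<And>s i j. s \<in> U \<Longrightarrow> i < N \<Longrightarrow> j < N \<Longrightarrow>
           ((\<lambda>r. c r i j) has_real_derivative c' s i j) (at s)"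
  shows "((\<lambda>s. pressure q N \<beta> (c s)) has_real_derivative
           (\<Sum>i<N. \<Sum>j<N. c' t i j / (2 * real N) *
              EJ N (c t) (\<lambda>J. ln (1 - (1 - exp (- \<beta>)) *
                 gibbs_avg q N (scaleJ \<beta> J) (\<lambda>\<sigma>. kdelta (\<sigma> i) (\<sigma> j))) / real N))) (at t)"
proof -
  define \<mu> where "\<mu> s k = c s (fst k) (snd k) / (2 * real N)" for s k
  define \<mu>' where "\<mu>' k = c' t (fst k) (snd k) / (2 * real N)" for k
  define g where "g = (\<lambda>J. ln (partfun q N (scaleJ \<beta> J)) / real N)"
  interpret poisson_family "{..<N} \<times> {..<N}" \<mu> \<mu>' U t
  proof
    show "finite ({..<N} \<times> {..<N})" "open U" "t \<in> U"
      using assms(4,5) by simp_all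
    show "0 \<le> \<mu> s k" if "s \<in> U" "k \<in> {..<N} \<times> {..<N}" for s k
      using assms(6)[OF that(1), of "fst k" "snd k"] that(2) by (auto simp: \<mu>_def)
    show "((\<lambda>s. \<mu> s k) has_real_derivative \<mu>' k) (at t)" if "k \<in> {..<N} \<times> {..<N}" for k
      unfolding \<mu>_def \<mu>'_def using that by (intro DERIV_cdivide assms(7)[OF assms(5)]) auto
  qed
  have law: "law s = J_law N (c s)" for s
    unfolding law_def J_law_def by (simp add: \<mu>_def case_prod_unfold)
  have increment: "g (J((i, j) := Suc (J (i, j)))) - g J = ln (1 - (1 - exp (- \<beta>)) *
      gibbs_avg q N (scaleJ \<beta> J) (\<lambda>\<sigma>. kdelta (\<sigma> i) (\<sigma> j))) / real N" if "i < N" "j < N" for i j J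
    using ln_partfun_scaleJ_increment[OF that assms(1)] by (simp add: g_def diff_divide_distrib[symmetric])
  have "\<bar>g J\<bar> \<le> (ln q + \<beta>) * 2 ^ (\<Sum>k\<in>{..<N} \<times> {..<N}. J k)" for J
    unfolding g_def by (rule abs_ln_partfun_scaleJ_div_le[OF assms(3,1,2)])
  then have "((\<lambda>s. measure_pmf.expectation (law s) g) has_real_derivative
      (\<Sum>k\<in>{..<N} \<times> {..<N}. \<mu>' k * measure_pmf.expectation (law t) (\<lambda>J. g (J(k := Suc (J k))) - g J))) (at t)"
    by (rule has_real_derivative_expectation_law)
  moreover have "(\<Sum>k\<in>{..<N} \<times> {..<N}. \<mu>' k * measure_pmf.expectation (law t) (\<lambda>J. g (J(k := Suc (J k))) - g J))
      = (\<Sum>(i, j)\<in>{..<N} \<times> {..<N}. c' t i j / (2 * real N) *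
          EJ N (c t) (\<lambda>J. ln (1 - (1 - exp (- \<beta>)) *
            gibbs_avg q N (scaleJ \<beta> J) (\<lambda>\<sigma>. kdelta (\<sigma> i) (\<sigma> j))) / real N))"
    by (intro sum.cong refl) (auto simp: law EJ_def \<mu>'_def increment)
  ultimately show ?thesis
    by (simp add: pressure_def EJ_def law g_def sum.cartesian_product)
qed

theorem mainTheorem2:
  fixes q N :: nat and \<beta> :: real and U :: "real set"
    and c c' :: "real \<Rightarrow> nat \<Rightarrow> nat \<Rightarrow> real" and t :: real
  assumes "q \<ge> 2" and "N \<ge> 1" and "\<beta> \<ge> 0"
    and "open U" and "t \<in> U"
    and "\<And>s i j. s \<in> U \<Longrightarrow> i < N \<Longrightarrow> j < N \<Longrightarrow> c s i j \<ge> 0"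
    and "\<And>s i j. s \<in> U \<Longrightarrow> i < N \<Longrightarrow> j < N \<Longrightarrow>
           ((\<lambda>r. c r i j) has_real_derivative c' s i j) (at s)"
  shows "((\<lambda>s. pressure q N \<beta> (c s)) has_real_derivative
           (1 / (2 * real N ^ 2)) * (\<Sum>i<N. \<Sum>j<N. c' t i j *
              EJ N (c t) (\<lambda>J. ln (1 - (1 - exp (- \<beta>)) *
                 gibbs_avg q N (scaleJ \<beta> J) (\<lambda>\<sigma>. kdelta (\<sigma> i) (\<sigma> j)))))) (at t)"
proof (rule DERIV_cong[OF has_real_derivative_pressure])
  show "1 \<le> q"
    using assms(1) by simp
  show "(\<Sum>i<N. \<Sum>j<N. c' t i j / (2 * real N) *
          EJ N (c t) (\<lambda>J. ln (1 - (1 - exp (- \<beta>)) *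
            gibbs_avg q N (scaleJ \<beta> J) (\<lambda>\<sigma>. kdelta (\<sigma> i) (\<sigma> j))) / real N))
      = 1 / (2 * real N ^ 2) * (\<Sum>i<N. \<Sum>j<N. c' t i j *
          EJ N (c t) (\<lambda>J. ln (1 - (1 - exp (- \<beta>)) *
            gibbs_avg q N (scaleJ \<beta> J) (\<lambda>\<sigma>. kdelta (\<sigma> i) (\<sigma> j)))))"
    unfolding sum_distrib_left by (intro sum.cong refl) (simp add: EJ_def power2_eq_square)
qed (use assms in auto)

end
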